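(* Let $\varphi$ be a metric formula built only with non-empty intervals $[m,n)$ ($m<n$), let $(\langle \mathbf{H},\mathbf{T}\rangle,\tau)$ be a strict timed HT-trace of length $\lambda>0$, let $\langle D,H,T\rangle$ be its corresponding $QHT[\preccurlyeq_\delta]$ interpretation, and let $i\in[0,\lambda)$. Then $$(\langle \mathbf{H},\mathbf{T}\rangle,\tau),i\models\varphi \iff \langle D,H,T\rangle\models[\varphi]_{\tau(i)},$$ $$(\langle \mathbf{T},\mathbf{T}\rangle,\tau),i\models\varphi \iff \langle D,T,T\rangle\models[\varphi]_{\tau(i)}.$$
   Context: Metric formulas over an alphabet $\mathcal{A}$: $\varphi ::= p \mid \bot \mid \varphi_1\otimes\varphi_2 \mid \bullet_I\varphi \mid \varphi_1\,\mathsf{S}_I\,\varphi_2 \mid \varphi_1\,\mathsf{T}_I\,\varphi_2 \mid \bigcirc_I\varphi \mid \varphi_1\,\mathsf{U}_I\,\varphi_2 \mid \varphi_1\,\mathsf{R}_I\,\varphi_2$, with $p\in\mathcal{A}$, $\otimes\in\{\to,\wedge,\vee\}$, $I=[m,n)$, $m\in\mathbb{N}$, $n\in\mathbb{N}\cup\{\omega\}$ (previous, since, trigger, next, until, release). Derived: $\neg\varphi=\varphi\to\bot$, $\top=\neg\bot$, weak previous $\widehat{\bullet}_I\varphi=\bullet_I\varphi\vee\neg\bullet_I\top$, weak next $\widehat{\bigcirc}_I\varphi=\bigcirc_I\varphi\vee\neg\bigcirc_I\top$. A timed HT-trace of length $\lambda\in\mathbb{N}\cup\{\omega\}$ is $(\langle\mathbf{H},\mathbf{T}\rangle,\tau)$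 with $\mathbf{H}=(H_i)_{i\in[0,\lambda)}$, $\mathbf{T}=(T_i)_{i\in[0,\lambda)}$, $H_i\subseteq T_i\subseteq\mathcal{A}$, and $\tau:[0,\lambda)\to\mathbb{N}$, $\tau(0)=0$, $\tau(i)\le\tau(i+1)$; it is strict if $\tau(i)<\tau(i+1)$ whenever $i+1<\lambda$. Satisfaction at $k\in[0,\lambda)$ for $\mathbf{M}=(\langle\mathbf{H},\mathbf{T}\rangle,\tau)$: $\mathbf{M},k\not\models\bot$; $\mathbf{M},k\models p$ iff $p\in H_k$; $\wedge,\vee$ as usual; $\mathbf{M},k\models\varphi\to\psi$ iff for both $\mathbf{M}'=\mathbf{M}$ and $\mathbf{M}'=(\langle\mathbf{T},\mathbf{T}\rangle,\tau)$, $\mathbf{M}',k\not\models\varphi$ or $\mathbf{M}',k\models\psi$; $\bullet_I\varphi$: $k>0$, $\mathbf{M},k-1\models\varphi$ and $\tau(k)-\tau(k-1)\in I$; $\varphi\,\mathsf{S}_I\,\psi$: for some $j\in[0,k]$ with $\tau(k)-\tau(j)\in I$, $\mathbf{M},j\models\psi$ and $\mathbf{M},i\models\varphi$ for all $i\in(j,k]$; $\varphi\,\mathsf{T}_I\,\psi$: for all $j\in[0,k]$ with $\tau(k)-\tau(j)\in I$, $\mathbf{M},j\models\psi$ or $\mathbf{M},i\models\varphi$ for some $i\in(j,k]$; $\bigcirc_I\varphi$: $k+1<\lambda$, $\mathbf{M},k+1\models\varphi$, $\tau(k+1)-\tau(k)\in I$; $\varphi\,\mathsf{U}_I\,\psi$: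 for some $j\in[k,\lambda)$ with $\tau(j)-\tau(k)\in I$, $\mathbf{M},j\models\psi$ and $\mathbf{M},i\models\varphi$ for all $i\in[k,j)$; $\varphi\,\mathsf{R}_I\,\psi$: for all $j\in[k,\lambda)$ with $\tau(j)-\tau(k)\in I$, $\mathbf{M},j\models\psi$ or $\mathbf{M},i\models\varphi$ for some $i\in[k,j)$. $QHT[\preccurlyeq_\delta]$: function-free first-order language with constant $0$, monadic predicates $p/1$ for $p\in\mathcal{A}$, and binary predicates $\preccurlyeq_\delta$, $\delta\in\mathbb{Z}\cup\{\omega\}$. An interpretation is $\langle D,H,T\rangle$ with $0\in D\subseteq\mathbb{N}$, $H\subseteq T\subseteq\{p(d)\mid p\in\mathcal{A},d\in D\}$. Satisfaction: $\langle D,H,T\rangle\models p(t)$ iff $p(t)\in H$; $\models t_1\preccurlyeq_\delta t_2$ iff $t_1-t_2\le\delta$; $\wedge,\vee$ as usual; $\models\varphi\to\psi$ iff for $X\in\{H,T\}$, $\langle D,X,T\rangle\not\models\varphi$ or $\langle D,X,T\rangle\models\psi$; $\forall x\,\varphi(x)$ iff $\varphi(t)$ holds for all $t\in D$; $\exists x\,\varphi(x)$ iff for some $t\in D$. Abbreviations: $x\prec_\delta y:=\neg(y\preccurlyeq_{-\delta}x)$, $x\le y:=x\preccurlyeq_0 y$, $x=y:=x\le y\wedge y\le x$, $x<y:=x\le y\wedge\neg(x=y)$, and $x\odot y\oplus z$ means $x\odot y\wedge y\oplus z$. Translation $[\cdot]_x$ (each quantifier introducing a fresh variable), for $I=[m,n)$: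 $[\bot]_x=\bot$; $[p]_x=p(x)$; $[\varphi\otimes\psi]_x=[\varphi]_x\otimes[\psi]_x$; $[\bigcirc_{[m,n)}\psi]_x=\exists y(x<y\wedge\neg\exists z\,(x<z<y)\wedge x\preccurlyeq_{-m}y\prec_n x\wedge[\psi]_y)$; $[\widehat{\bigcirc}_{[m,n)}\psi]_x=\forall y(x<y\wedge\neg\exists z\,(x<z<y)\wedge x\preccurlyeq_{-m}y\prec_n x\to[\psi]_y)$; $[\varphi\,\mathsf{U}_{[m,n)}\,\psi]_x=\exists y(x\le y\wedge x\preccurlyeq_{-m}y\prec_n x\wedge[\psi]_y\wedge\forall z(x\le z<y\to[\varphi]_z))$; $[\varphi\,\mathsf{R}_{[m,n)}\,\psi]_x=\forall y((x\le y\wedge x\preccurlyeq_{-m}y\prec_n x)\to([\psi]_y\vee\exists z(x\le z<y\wedge[\varphi]_z)))$; $[\bullet_{[m,n)}\psi]_x=\exists y(y<x\wedge\neg\exists z(y<z<x)\wedge x\prec_n y\preccurlyeq_{-m}x\wedge[\psi]_y)$; $[\widehat{\bullet}_{[m,n)}\psi]_x=\forall y((y<x\wedge\neg\exists z(y<z<x)\wedge x\prec_n y\preccurlyeq_{-m}x)\to[\psi]_y)$; $[\varphi\,\mathsf{S}_{[m,n)}\,\psi]_x=\exists y(y\le x\wedge x\prec_n y\preccurlyeq_{-m}x\wedge[\psi]_y\wedge\forall z(y<z\le x\to[\varphi]_z))$; $[\varphi\,\mathsf{T}_{[m,n)}\,\psi]_x=\forall y((y\le x\wedge x\prec_n y\preccurlyeq_{-m}x)\to([\psi]_y\vee\exists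 z(y<z\le x\wedge[\varphi]_z)))$. The interpretation corresponding to $(\langle\mathbf{H},\mathbf{T}\rangle,\tau)$ of length $\lambda>0$ is $\langle D,H,T\rangle$ with $D=\{\tau(i)\mid i\in[0,\lambda)\}$, $H=\{p(\tau(i))\mid i\in[0,\lambda),p\in H_i\}$, $T=\{p(\tau(i))\mid i\in[0,\lambda),p\in T_i\}$. *)

theory Defs
  imports Main "HOL-Library.Extended_Nat"
begin

type_synonym interval = "nat \<times> enat"

definition inI :: "nat \<Rightarrow> interval \<Rightarrow> bool" where
  "inI d I = (fst I \<le> d \<and> enat d < snd I)"

text \<open>Weak previous / weak next are included as constructors (their semantics is that of
  the derived forms) so that the dedicated translation clauses of the paper apply to them.\<close>
datatype 'a mformula =
    Atom 'a
  | MBot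
  | MImp "'a mformula" "'a mformula"
  | MAnd "'a mformula" "'a mformula"
  | MOr "'a mformula" "'a mformula"
  | Prev interval "'a mformula"
  | Since interval "'a mformula" "'a mformula"
  | Trigger interval "'a mformula" "'a mformula"
  | Next interval "'a mformula"
  | Until interval "'a mformula" "'a mformula"
  | Release interval "'a mformula" "'a mformula"
  | WPrev interval "'a mformula"
  | WNext interval "'a mformula"

fun nonempty_intervals :: "'a mformula \<Rightarrow> bool" where
  "nonempty_intervals (Atom p) = True"
| "nonempty_intervals MBot = True"
| "nonempty_intervals (MImp a b) = (nonempty_intervals a \<and> nonempty_intervals b)"
| "nonempty_intervals (MAnd a b) = (nonempty_intervals a \<and> nonempty_intervals b)"
| "nonempty_intervals (MOr a b) = (nonempty_intervals a \<and> nonempty_intervals b)"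
| "nonempty_intervals (Prev I a) = (enat (fst I) < snd I \<and> nonempty_intervals a)"
| "nonempty_intervals (Since I a b) = (enat (fst I) < snd I \<and> nonempty_intervals a \<and> nonempty_intervals b)"
| "nonempty_intervals (Trigger I a b) = (enat (fst I) < snd I \<and> nonempty_intervals a \<and> nonempty_intervals b)"
| "nonempty_intervals (Next I a) = (enat (fst I) < snd I \<and> nonempty_intervals a)"
| "nonempty_intervals (Until I a b) = (enat (fst I) < snd I \<and> nonempty_intervals a \<and> nonempty_intervals b)"
| "nonempty_intervals (Release I a b) = (enat (fst I) < snd I \<and> nonempty_intervals a \<and> nonempty_intervals b)"
| "nonempty_intervals (WPrev I a) = (enat (fst I) < snd I \<and> nonempty_intervals a)"
| "nonempty_intervals (WNext I a) = (enat (fst I) < snd I \<and> nonempty_intervals a)"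

text \<open>A trace of length L (enat, \<infinity> = omega) is given by H, T, tau :: nat => _;
  only positions i with enat i < L matter.\<close>
definition timed_ht_trace :: "enat \<Rightarrow> (nat \<Rightarrow> 'a set) \<Rightarrow> (nat \<Rightarrow> 'a set) \<Rightarrow> (nat \<Rightarrow> nat) \<Rightarrow> bool" where
  "timed_ht_trace L H T \<tau> =
     ((\<forall>i. enat i < L \<longrightarrow> H i \<subseteq> T i) \<and> \<tau> 0 = 0 \<and>
      (\<forall>i. enat (Suc i) < L \<longrightarrow> \<tau> i \<le> \<tau> (Suc i)))"

definition strict_timed_ht_trace :: "enat \<Rightarrow> (nat \<Rightarrow> 'a set) \<Rightarrow> (nat \<Rightarrow> 'a set) \<Rightarrow> (nat \<Rightarrow> nat) \<Rightarrow> bool" where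
  "strict_timed_ht_trace L H T \<tau> =
     (timed_ht_trace L H T \<tau> \<and> (\<forall>i. enat (Suc i) < L \<longrightarrow> \<tau> i < \<tau> (Suc i)))"

text \<open>WPrev/WNext: semantics of the derived forms  \<bullet>\<phi> \<or> \<not>\<bullet>\<top>  and  \<circle>\<phi> \<or> \<not>\<circle>\<top>, with
  \<not>\<bullet>\<top> (resp. \<not>\<circle>\<top>) unfolded (they do not depend on the here-component).\<close>
fun msat :: "enat \<Rightarrow> (nat \<Rightarrow> 'a set) \<Rightarrow> (nat \<Rightarrow> 'a set) \<Rightarrow> (nat \<Rightarrow> nat) \<Rightarrow> nat \<Rightarrow> 'a mformula \<Rightarrow> bool" where
  "msat L H T \<tau> k (Atom p) = (p \<in> H k)"
| "msat L H T \<tau> k MBot = False"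
| "msat L H T \<tau> k (MImp a b) =
     ((msat L H T \<tau> k a \<longrightarrow> msat L H T \<tau> k b) \<and> (msat L T T \<tau> k a \<longrightarrow> msat L T T \<tau> k b))"
| "msat L H T \<tau> k (MAnd a b) = (msat L H T \<tau> k a \<and> msat L H T \<tau> k b)"
| "msat L H T \<tau> k (MOr a b) = (msat L H T \<tau> k a \<or> msat L H T \<tau> k b)"
| "msat L H T \<tau> k (Prev I a) = (0 < k \<and> msat L H T \<tau> (k - 1) a \<and> inI (\<tau> k - \<tau> (k - 1)) I)"
| "msat L H T \<tau> k (Since I a b) =
     (\<exists>j\<le>k. inI (\<tau> k - \<tau> j) I \<and> msat L H T \<tau> j b \<and> (\<forall>i. j < i \<and> i \<le> k \<longrightarrow> msat L H T \<tau> i a))"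
| "msat L H T \<tau> k (Trigger I a b) =
     (\<forall>j\<le>k. inI (\<tau> k - \<tau> j) I \<longrightarrow> msat L H T \<tau> j b \<or> (\<exists>i. j < i \<and> i \<le> k \<and> msat L H T \<tau> i a))"
| "msat L H T \<tau> k (Next I a) = (enat (Suc k) < L \<and> msat L H T \<tau> (Suc k) a \<and> inI (\<tau> (Suc k) - \<tau> k) I)"
| "msat L H T \<tau> k (Until I a b) =
     (\<exists>j. k \<le> j \<and> enat j < L \<and> inI (\<tau> j - \<tau> k) I \<and> msat L H T \<tau> j b \<and>
          (\<forall>i. k \<le> i \<and> i < j \<longrightarrow> msat L H T \<tau> i a))"
| "msat L H T \<tau> k (Release I a b) =
     (\<forall>j. k \<le> j \<and> enat j < L \<and> inI (\<tau> j - \<tau> k) I \<longrightarrow>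
          msat L H T \<tau> j b \<or> (\<exists>i. k \<le> i \<and> i < j \<and> msat L H T \<tau> i a))"
| "msat L H T \<tau> k (WPrev I a) =
     ((0 < k \<and> msat L H T \<tau> (k - 1) a \<and> inI (\<tau> k - \<tau> (k - 1)) I) \<or>
      \<not> (0 < k \<and> inI (\<tau> k - \<tau> (k - 1)) I))"
| "msat L H T \<tau> k (WNext I a) =
     ((enat (Suc k) < L \<and> msat L H T \<tau> (Suc k) a \<and> inI (\<tau> (Suc k) - \<tau> k) I) \<or>
      \<not> (enat (Suc k) < L \<and> inI (\<tau> (Suc k) - \<tau> k) I))"

datatype delta = DFin int | DOmega

datatype fterm = FVar nat | FZero

datatype 'a fo =
    FBot
  | FPred 'a fterm
  | FLeq delta fterm fterm
  | FAnd "'a fo" "'a fo"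
  | FOr "'a fo" "'a fo"
  | FImp "'a fo" "'a fo"
  | FAll nat "'a fo"
  | FEx nat "'a fo"

fun teval :: "(nat \<Rightarrow> nat) \<Rightarrow> fterm \<Rightarrow> nat" where
  "teval e (FVar v) = e v"
| "teval e FZero = 0"

text \<open>Interpretation \<langle>D,X,T\<rangle>; ground atoms p(d) are represented as pairs (p,d).\<close>
fun fo_sat :: "nat set \<Rightarrow> ('a \<times> nat) set \<Rightarrow> ('a \<times> nat) set \<Rightarrow> (nat \<Rightarrow> nat) \<Rightarrow> 'a fo \<Rightarrow> bool" where
  "fo_sat D X T e FBot = False"
| "fo_sat D X T e (FPred p t) = ((p, teval e t) \<in> X)"
| "fo_sat D X T e (FLeq (DFin d) t1 t2) = (int (teval e t1) - int (teval e t2) \<le> d)"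
| "fo_sat D X T e (FLeq DOmega t1 t2) = True"
| "fo_sat D X T e (FAnd a b) = (fo_sat D X T e a \<and> fo_sat D X T e b)"
| "fo_sat D X T e (FOr a b) = (fo_sat D X T e a \<or> fo_sat D X T e b)"
| "fo_sat D X T e (FImp a b) =
     ((fo_sat D X T e a \<longrightarrow> fo_sat D X T e b) \<and> (fo_sat D T T e a \<longrightarrow> fo_sat D T T e b))"
| "fo_sat D X T e (FAll v a) = (\<forall>d\<in>D. fo_sat D X T (e(v := d)) a)"
| "fo_sat D X T e (FEx v a) = (\<exists>d\<in>D. fo_sat D X T (e(v := d)) a)"

definition FNeg :: "'a fo \<Rightarrow> 'a fo" where "FNeg a = FImp a FBot"
definition FTop :: "'a fo" where "FTop = FNeg FBot"
definition Fle :: "nat \<Rightarrow> nat \<Rightarrow> 'a fo" where "Fle x y = FLeq (DFin 0) (FVar x) (FVar y)"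
definition Feq :: "nat \<Rightarrow> nat \<Rightarrow> 'a fo" where "Feq x y = FAnd (Fle x y) (Fle y x)"
definition Flt :: "nat \<Rightarrow> nat \<Rightarrow> 'a fo" where "Flt x y = FAnd (Fle x y) (FNeg (Feq x y))"
definition Fprecneg :: "nat \<Rightarrow> nat \<Rightarrow> nat \<Rightarrow> 'a fo" where
  "Fprecneg x m y = FLeq (DFin (- int m)) (FVar x) (FVar y)"
text \<open>x \<prec>_n y := \<not>(y \<preccurlyeq>_{-n} x); for n = \<omega>, y \<preccurlyeq>_{-\<omega>} x never holds, so x \<prec>_\<omega> y is \<top>.\<close>
definition Fprec :: "nat \<Rightarrow> enat \<Rightarrow> nat \<Rightarrow> 'a fo" where
  "Fprec x n y = (case n of enat k \<Rightarrow> FNeg (FLeq (DFin (- int k)) (FVar y) (FVar x)) | \<infinity> \<Rightarrow> FTop)"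
definition Ffut :: "nat \<Rightarrow> nat \<Rightarrow> interval \<Rightarrow> 'a fo" where
  "Ffut x y I = FAnd (Fprecneg x (fst I) y) (Fprec y (snd I) x)"
definition Fpast :: "nat \<Rightarrow> nat \<Rightarrow> interval \<Rightarrow> 'a fo" where
  "Fpast x y I = FAnd (Fprec x (snd I) y) (Fprecneg y (fst I) x)"

text \<open>Translation  tr \<phi> x k = [\<phi>]_x, where x is a variable and all variables \<ge> k are fresh;
  each quantifier introduces a fresh variable (y = k, z = k+1).\<close>
fun tr :: "'a mformula \<Rightarrow> nat \<Rightarrow> nat \<Rightarrow> 'a fo" where
  "tr MBot x k = FBot"
| "tr (Atom p) x k = FPred p (FVar x)"
| "tr (MImp a b) x k = FImp (tr a x k) (tr b x k)"
| "tr (MAnd a b) x k = FAnd (tr a x k) (tr b x k)"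
| "tr (MOr a b) x k = FOr (tr a x k) (tr b x k)"
| "tr (Next I a) x k =
     FEx k (FAnd (Flt x k) (FAnd (FNeg (FEx (Suc k) (FAnd (Flt x (Suc k)) (Flt (Suc k) k))))
       (FAnd (Ffut x k I) (tr a k (Suc k)))))"
| "tr (WNext I a) x k =
     FAll k (FImp (FAnd (Flt x k) (FAnd (FNeg (FEx (Suc k) (FAnd (Flt x (Suc k)) (Flt (Suc k) k))))
       (Ffut x k I))) (tr a k (Suc k)))"
| "tr (Until I a b) x k =
     FEx k (FAnd (Fle x k) (FAnd (Ffut x k I) (FAnd (tr b k (Suc k))
       (FAll (Suc k) (FImp (FAnd (Fle x (Suc k)) (Flt (Suc k) k)) (tr a (Suc k) (Suc (Suc k))))))))"
| "tr (Release I a b) x k =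
     FAll k (FImp (FAnd (Fle x k) (Ffut x k I)) (FOr (tr b k (Suc k))
       (FEx (Suc k) (FAnd (FAnd (Fle x (Suc k)) (Flt (Suc k) k)) (tr a (Suc k) (Suc (Suc k)))))))"
| "tr (Prev I a) x k =
     FEx k (FAnd (Flt k x) (FAnd (FNeg (FEx (Suc k) (FAnd (Flt k (Suc k)) (Flt (Suc k) x))))
       (FAnd (Fpast x k I) (tr a k (Suc k)))))"
| "tr (WPrev I a) x k =
     FAll k (FImp (FAnd (Flt k x) (FAnd (FNeg (FEx (Suc k) (FAnd (Flt k (Suc k)) (Flt (Suc k) x))))
       (Fpast x k I))) (tr a k (Suc k)))"
| "tr (Since I a b) x k =
     FEx k (FAnd (Fle k x) (FAnd (Fpast x k I) (FAnd (tr b k (Suc k))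
       (FAll (Suc k) (FImp (FAnd (Flt k (Suc k)) (Fle (Suc k) x)) (tr a (Suc k) (Suc (Suc k))))))))"
| "tr (Trigger I a b) x k =
     FAll k (FImp (FAnd (Fle k x) (Fpast x k I)) (FOr (tr b k (Suc k))
       (FEx (Suc k) (FAnd (FAnd (Flt k (Suc k)) (Fle (Suc k) x)) (tr a (Suc k) (Suc (Suc k)))))))"

definition trace_dom :: "enat \<Rightarrow> (nat \<Rightarrow> nat) \<Rightarrow> nat set" where
  "trace_dom L \<tau> = {\<tau> i | i. enat i < L}"

definition trace_atoms :: "enat \<Rightarrow> (nat \<Rightarrow> nat) \<Rightarrow> (nat \<Rightarrow> 'a set) \<Rightarrow> ('a \<times> nat) set" where
  "trace_atoms L \<tau> X = {(p, \<tau> i) | p i. enat i < L \<and> p \<in> X i}"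

end

theory Submission
  imports Defs
begin

(* Induction on the formula, evaluating [phi]_x under an assignment that sends x to tau(j).
   Since tau is strictly increasing it is an order isomorphism from the positions onto D, so the
   quantifiers of the translation range over positions, its order and distance atoms compare
   positions and time differences, and "no element strictly between" singles out the successor
   position.  The one discrepancy is that an implication of QHT is also evaluated in the there-world,
   including the guarded implications inside the quantifiers for S, T, U, R and the weak
   operators; their guards do not mention the here-world, so by persistence the there-world
   conjunct is redundant. *)

lemma enat_le_less_trans: "i \<le> j \<Longrightarrow> enat j < L \<Longrightarrow> enat i < L"
  using enat_ord_simps(1) order_le_less_trans by blast

lemma enat_Suc_lessD: "enat (Suc n) < L \<Longrightarrow> enat n < L"
  using enat_le_less_trans[of n "Suc n" L] by simp

lemma no_position_between_iff_Suc [simp]: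
  assumes "enat j < L" "i < j"
  shows "(\<forall>m>i. enat m < L \<longrightarrow> \<not> m < j) \<longleftrightarrow> j = Suc i"
proof
  assume "\<forall>m>i. enat m < L \<longrightarrow> \<not> m < j"
  moreover have "enat (Suc i) < L"
    using assms by (blast intro: enat_le_less_trans Suc_leI)
  ultimately show "j = Suc i"
    using \<open>i < j\<close> by (metis Suc_lessI lessI)
qed auto

lemma fo_sat_Fle [simp]: "fo_sat D X T e (Fle x y) \<longleftrightarrow> e x \<le> e y"
  by (simp add: Fle_def)

lemma fo_sat_FNeg [simp]:
  "fo_sat D X T e (FNeg a) \<longleftrightarrow> \<not> fo_sat D X T e a \<and> \<not> fo_sat D T T e a"
  by (simp add: FNeg_def)

lemma fo_sat_Flt [simp]: "fo_sat D X T e (Flt x y) \<longleftrightarrow> e x < e y"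
  by (auto simp: Flt_def Feq_def)

lemma fo_sat_Ffut [simp]:
  "e x \<le> e y \<Longrightarrow> fo_sat D X T e (Ffut x y I) \<longleftrightarrow> inI (e y - e x) I"
  by (cases "snd I") (auto simp: Ffut_def Fprec_def Fprecneg_def inI_def FTop_def)

lemma fo_sat_Fpast [simp]:
  "e y \<le> e x \<Longrightarrow> fo_sat D X T e (Fpast x y I) \<longleftrightarrow> inI (e x - e y) I"
  by (cases "snd I") (auto simp: Fpast_def Fprec_def Fprecneg_def inI_def FTop_def)

lemma fo_sat_persistent: "X \<subseteq> T \<Longrightarrow> fo_sat D X T e a \<Longrightarrow> fo_sat D T T e a"
proof (induction a arbitrary: e)
  case (FLeq d t1 t2)
  then show ?case by (cases d) auto
qed auto

(* A guard that reads the same in both worlds makes the implication classical.  That hypothesis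
   is an equation because the simplifier does not discharge it in implication form. *)
lemma fo_sat_FImp_rigid [simp]:
  assumes "X \<subseteq> T" "fo_sat D T T e g \<longleftrightarrow> fo_sat D X T e g"
  shows "fo_sat D X T e (FImp g b) \<longleftrightarrow> (fo_sat D X T e g \<longrightarrow> fo_sat D X T e b)"
  using assms fo_sat_persistent by auto

lemma bex_trace_dom [simp]:
  "(\<exists>d\<in>trace_dom L \<tau>. P d) \<longleftrightarrow> (\<exists>i. enat i < L \<and> P (\<tau> i))"
  by (auto simp: trace_dom_def)

lemma ball_trace_dom [simp]:
  "(\<forall>d\<in>trace_dom L \<tau>. P d) \<longleftrightarrow> (\<forall>i. enat i < L \<longrightarrow> P (\<tau> i))"
  by (auto simp: trace_dom_def)

lemma trace_atoms_mono:
  "(\<And>i. enat i < L \<Longrightarrow> X i \<subseteq> T i) \<Longrightarrow> trace_atoms L \<tau> X \<subseteq> trace_atoms L \<tau> T"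
  by (auto simp: trace_atoms_def)

lemma strict_timed_ht_trace_strict_mono_on:
  assumes "strict_timed_ht_trace L H T \<tau>"
  shows "strict_mono_on {i. enat i < L} \<tau>"
proof (rule strict_mono_onI)
  fix i j assume "i \<in> {i. enat i < L}" "j \<in> {i. enat i < L}" "i < j"
  moreover have "{i..<j} \<subseteq> {m. enat (Suc m) < L}"
    using \<open>j \<in> {i. enat i < L}\<close> by (auto simp: Suc_le_eq[symmetric] intro: enat_le_less_trans)
  ultimately show "\<tau> i < \<tau> j"
    using assms lift_Suc_mono_less_ivl[of "{m. enat (Suc m) < L}" \<tau> i j]
    by (simp add: strict_timed_ht_trace_def)
qed

locale strictly_timed =
  fixes L :: enat and \<tau> :: "nat \<Rightarrow> nat"
  assumes strict_mono_on_\<tau>: "strict_mono_on {i. enat i < L} \<tau>"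
begin

lemma \<tau>_less_iff [simp]: "enat i < L \<Longrightarrow> enat j < L \<Longrightarrow> \<tau> i < \<tau> j \<longleftrightarrow> i < j"
  using strict_mono_on_\<tau> by (simp add: strict_mono_on_less)

lemma \<tau>_le_iff [simp]: "enat i < L \<Longrightarrow> enat j < L \<Longrightarrow> \<tau> i \<le> \<tau> j \<longleftrightarrow> i \<le> j"
  using strict_mono_on_\<tau> by (simp add: strict_mono_on_less_eq)

lemma mem_trace_atoms_iff [simp]:
  "enat j < L \<Longrightarrow> (p, \<tau> j) \<in> trace_atoms L \<tau> X \<longleftrightarrow> p \<in> X j"
  using strict_mono_on_\<tau> by (auto simp: trace_atoms_def strict_mono_on_eq)

lemma no_timestamp_between_iff_Suc [simp]:
  assumes "enat i < L" "enat j < L" "i < j"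
  shows "(\<forall>m. \<tau> i < \<tau> m \<longrightarrow> enat m < L \<longrightarrow> \<not> m < j) \<longleftrightarrow> j = Suc i"
proof -
  have "(\<forall>m. \<tau> i < \<tau> m \<longrightarrow> enat m < L \<longrightarrow> \<not> m < j) \<longleftrightarrow> (\<forall>m>i. enat m < L \<longrightarrow> \<not> m < j)"
    using assms(1) by (meson \<tau>_less_iff)
  with assms(2,3) show ?thesis by simp
qed

(* All variables bound in tr phi x k are >= k, so x < k keeps the value of x intact.
   Deleting the FImp equation of fo_sat lets fo_sat_FImp_rigid fire on the guarded quantifiers. *)
lemma fo_sat_tr_iff_msat:
  assumes "x < k" "e x = \<tau> j" "enat j < L" "trace_atoms L \<tau> X \<subseteq> trace_atoms L \<tau> T"
  shows "fo_sat (trace_dom L \<tau>) (trace_atoms L \<tau> X) (trace_atoms L \<tau> T) e (tr \<phi> x k)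
    \<longleftrightarrow> msat L X T \<tau> j \<phi>"
  using assms
proof (induction \<phi> arbitrary: X x k e j)
  case (Prev I a)
  then show ?case by (cases j) (auto cong: conj_cong dest: enat_Suc_lessD)
next
  case (WPrev I a)
  then show ?case
    by (cases j) (auto cong: conj_cong simp del: fo_sat.simps(7) dest: enat_Suc_lessD)
next
  case (Next I a)
  then show ?case by (auto cong: conj_cong)
next
  case (WNext I a)
  then show ?case by (auto cong: conj_cong simp del: fo_sat.simps(7))
next
  case (Since I a b)
  then show ?case
    by (auto cong: conj_cong simp del: fo_sat.simps(7) intro: enat_le_less_trans[OF _ Since.prems(3)])
      (meson enat_le_less_trans[OF _ Since.prems(3)])
next
  case (Trigger I a b)
  then show ?case
    by (auto cong: conj_cong simp del: fo_sat.simps(7) intro: enat_le_less_trans[OF _ Trigger.prems(3)])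
      (meson enat_le_less_trans[OF _ Trigger.prems(3)])
next
  case (Until I a b)
  then show ?case
    by (auto cong: conj_cong simp del: fo_sat.simps(7)) (meson enat_le_less_trans less_imp_le)
next
  case (Release I a b)
  then show ?case
    by (auto cong: conj_cong simp del: fo_sat.simps(7)) (meson enat_le_less_trans less_imp_le)
qed simp_all

end

theorem theorem5:
  fixes \<phi> :: "'a mformula" and L :: enat and H T :: "nat \<Rightarrow> 'a set" and \<tau> :: "nat \<Rightarrow> nat" and i :: nat
  assumes "nonempty_intervals \<phi>"
    and "strict_timed_ht_trace L H T \<tau>"
    and "0 < L"
    and "enat i < L"
  shows "(msat L H T \<tau> i \<phi> \<longleftrightarrow>
            fo_sat (trace_dom L \<tau>) (trace_atoms L \<tau> H) (trace_atoms L \<tau> T) (\<lambda>_. \<tau> i) (tr \<phi> 0 1))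
       \<and> (msat L T T \<tau> i \<phi> \<longleftrightarrow>
            fo_sat (trace_dom L \<tau>) (trace_atoms L \<tau> T) (trace_atoms L \<tau> T) (\<lambda>_. \<tau> i) (tr \<phi> 0 1))"
proof -
  interpret strictly_timed L \<tau>
    using assms(2) by unfold_locales (rule strict_timed_ht_trace_strict_mono_on)
  have "trace_atoms L \<tau> H \<subseteq> trace_atoms L \<tau> T"
    using assms(2) by (intro trace_atoms_mono) (simp add: strict_timed_ht_trace_def timed_ht_trace_def)
  then show ?thesis
    using fo_sat_tr_iff_msat[of 0 1 "\<lambda>_. \<tau> i" i H T \<phi>]
      fo_sat_tr_iff_msat[of 0 1 "\<lambda>_. \<tau> i" i T T \<phi>] assms(4)
    by simp
qed

end
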